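(* Let $n$ be even, $F\colon\mathbb F_2^n\to\mathbb F_2^n$ a quadratic APN function, and $\mathcal V_F=\{V_b\colon b\in\mathbb F_2^n\setminus\{0\},\ \dim(V_b)\ge1\}$. Then $|N_F|=|\mathcal V_F|$.
   Context: $\langle\cdot,\cdot\rangle$ is the standard dot product. $F$ is APN if for every $a\ne0$ and $c$, $F(x)+F(x+a)=c$ has at most 2 solutions; quadratic if each component $F_b(x)=\langle b,F(x)\rangle$ is a quadratic form plus an affine function. $F_b$ is bent if $|W_F(b,a)|=2^{n/2}$ for all $a$, where $W_F(b,a)=\sum_x(-1)^{F_b(x)+\langle x,a\rangle}$. $N_F=\{b\in\mathbb F_2^n\setminus\{0\}\colon F_b\text{ is not bent}\}$. With $D_{F,a}(x)=F(x)+F(x+a)$, $H_b=\{x:\langle b,x\rangle=0\}$, $\overline{H_b}=\{x:\langle b,x\rangle=1\}$: $T_b=\{a:\mathrm{Im}(D_{F,a})=H_b\}\cup\{0\}$, $\overline{T_b}=\{a:\mathrm{Im}(D_{F,a})=\overline{H_b}\}$, $V_b=T_b\cup\overline{T_b}$ (a linear subspace). *)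

theory Defs
  imports "HOL-Analysis.Analysis" "HOL-Library.Z2"
begin

text \<open>F_2^n is modelled as bit ^ 'n, with n = CARD('n).\<close>

definition dotp :: "bit ^ 'n \<Rightarrow> bit ^ 'n \<Rightarrow> bit" where
  "dotp b x = (\<Sum>i\<in>UNIV. b $ i * x $ i)"

definition component :: "(bit ^ 'n \<Rightarrow> bit ^ 'n) \<Rightarrow> bit ^ 'n \<Rightarrow> bit ^ 'n \<Rightarrow> bit" where
  "component F b x = dotp b (F x)"

definition is_APN :: "(bit ^ 'n \<Rightarrow> bit ^ 'n) \<Rightarrow> bool" where
  "is_APN F \<longleftrightarrow> (\<forall>a c. a \<noteq> 0 \<longrightarrow> card {x. F x + F (x + a) = c} \<le> 2)"

definition is_quadratic :: "(bit ^ 'n \<Rightarrow> bit ^ 'n) \<Rightarrow> bool" where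
  "is_quadratic F \<longleftrightarrow> (\<forall>b. \<exists>(c :: 'n \<Rightarrow> 'n \<Rightarrow> bit) (a :: bit ^ 'n) (e :: bit).
      \<forall>x. component F b x = (\<Sum>i\<in>UNIV. \<Sum>j\<in>UNIV. c i j * x $ i * x $ j) + dotp a x + e)"

definition sgn_bit :: "bit \<Rightarrow> int" where
  "sgn_bit v = (if v = 0 then 1 else -1)"

definition walsh :: "(bit ^ 'n \<Rightarrow> bit ^ 'n) \<Rightarrow> bit ^ 'n \<Rightarrow> bit ^ 'n \<Rightarrow> int" where
  "walsh F b a = (\<Sum>x\<in>UNIV. sgn_bit (component F b x + dotp x a))"

definition is_bent_component :: "(bit ^ 'n \<Rightarrow> bit ^ 'n) \<Rightarrow> bit ^ 'n \<Rightarrow> bool" where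
  "is_bent_component F b \<longleftrightarrow> (\<forall>a. real_of_int \<bar>walsh F b a\<bar> = sqrt (2 ^ CARD('n)))"

definition NF :: "(bit ^ 'n \<Rightarrow> bit ^ 'n) \<Rightarrow> (bit ^ 'n) set" where
  "NF F = {b. b \<noteq> 0 \<and> \<not> is_bent_component F b}"

definition Dder :: "(bit ^ 'n \<Rightarrow> bit ^ 'n) \<Rightarrow> bit ^ 'n \<Rightarrow> bit ^ 'n \<Rightarrow> bit ^ 'n" where
  "Dder F a x = F x + F (x + a)"

definition Hyp :: "bit ^ 'n \<Rightarrow> (bit ^ 'n) set" where
  "Hyp b = {x. dotp b x = 0}"

definition Hypc :: "bit ^ 'n \<Rightarrow> (bit ^ 'n) set" where
  "Hypc b = {x. dotp b x = 1}"

definition Tset :: "(bit ^ 'n \<Rightarrow> bit ^ 'n) \<Rightarrow> bit ^ 'n \<Rightarrow> (bit ^ 'n) set" where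
  "Tset F b = {a. range (Dder F a) = Hyp b} \<union> {0}"

definition Tcset :: "(bit ^ 'n \<Rightarrow> bit ^ 'n) \<Rightarrow> bit ^ 'n \<Rightarrow> (bit ^ 'n) set" where
  "Tcset F b = {a. range (Dder F a) = Hypc b}"

definition Vset :: "(bit ^ 'n \<Rightarrow> bit ^ 'n) \<Rightarrow> bit ^ 'n \<Rightarrow> (bit ^ 'n) set" where
  "Vset F b = Tset F b \<union> Tcset F b"

definition VF :: "(bit ^ 'n \<Rightarrow> bit ^ 'n) \<Rightarrow> (bit ^ 'n) set set" where
  "VF F = {Vset F b | b. b \<noteq> 0 \<and> vec.dim (Vset F b) \<ge> 1}"

end

theory Submission
  imports Defs
begin

text \<open>
  For quadratic F the derivative x \<mapsto> F_b(x) + F_b(x + a) of a component is affine, so it is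
  either constant or balanced. Since the squared Walsh spectrum of F_b is the Fourier transform of
  its autocorrelation, F_b is bent iff all derivatives in nonzero directions are balanced. Hence
  F_b is not bent iff some D_a F (a \<noteq> 0) has image inside H_b or its complement. For APN F
  that image has 2^(n-1) elements, as many as H_b, so the inclusion is an equality: F_b is not bent
  iff V_b \<noteq> {0}. A nonzero a determines the hyperplane and thus b, so b \<mapsto> V_b is
  injective on N_F, and its image is the family V_F.
\<close>

(* Z2 rewrites + and * on bit to XOR and AND by default; keep ring notation instead. *)
declare add_bit_eq_xor [simp del] mult_bit_eq_and [simp del]

lemma UNIV_bit: "(UNIV :: bit set) = {0, 1}"
  by (auto intro: bit.exhaust)

instance bit :: finite
  by standard (simp add: UNIV_bit)

lemma card_UNIV_bit [simp]: "CARD(bit) = 2"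
  by (simp add: UNIV_bit)

lemma bit_add_self [simp]: "(x :: bit) + x = 0"
  by (cases x) simp_all

lemma vec_bit_add_self [simp]: "(x :: bit ^ 'n) + x = 0"
  by (simp add: vec_eq_iff)

lemma vec_bit_add_add_cancel [simp]: "(x :: bit ^ 'n) + a + a = x"
  by (simp add: add.assoc)

lemma sum_UNIV_translate:
  fixes h :: "'a :: ab_group_add \<Rightarrow> 'b :: comm_monoid_add"
  shows "(\<Sum>x\<in>UNIV. h (x + e)) = (\<Sum>x\<in>UNIV. h x)"
  by (rule sum.reindex_bij_witness[where i = "\<lambda>x. x - e" and j = "\<lambda>x. x + e"]) auto

lemma dotp_add_right: "dotp b (x + y) = dotp b x + dotp b y"
  unfolding dotp_def by (simp add: distrib_left sum.distrib)

lemma dotp_commute: "dotp b x = dotp x b"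
  unfolding dotp_def by (simp add: mult.commute)

lemma dotp_add_left: "dotp (x + y) b = dotp x b + dotp y b"
  by (simp add: dotp_commute[of _ b] dotp_add_right)

lemma dotp_0_right [simp]: "dotp b 0 = 0"
  unfolding dotp_def by simp

lemma dotp_axis: "dotp b (axis i 1) = b $ i"
  unfolding dotp_def axis_def by (simp add: if_distrib cong: if_cong)

lemma exists_dotp_eq_1:
  assumes "b \<noteq> 0"
  obtains u where "dotp b u = 1"
proof -
  obtain i where "b $ i = 1"
    using assms by (metis vec_eq_iff zero_index bit_not_zero_iff)
  then show ?thesis using that[of "axis i 1"] by (simp add: dotp_axis)
qed

lemma bit_eq_iff_agree_at: "(p :: bit) = q \<longleftrightarrow> (p = v \<longleftrightarrow> q = v)"
  by (cases p; cases q; cases v) simp_all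

lemma eq_if_same_dotp_level_set:
  assumes "\<And>x. dotp b x = v \<longleftrightarrow> dotp b' x = v"
  shows "b = b'"
proof -
  have "b $ i = b' $ i" for i
    using assms[of "axis i 1"] bit_eq_iff_agree_at[of "b $ i" "b' $ i" v] by (simp add: dotp_axis)
  then show ?thesis by (simp add: vec_eq_iff)
qed

lemma Hyp_inject: "Hyp b = Hyp b' \<Longrightarrow> b = b'"
  by (rule eq_if_same_dotp_level_set) (auto simp: Hyp_def set_eq_iff)

lemma Hypc_inject: "Hypc b = Hypc b' \<Longrightarrow> b = b'"
  by (rule eq_if_same_dotp_level_set) (auto simp: Hypc_def set_eq_iff)

lemma Hyp_neq_Hypc: "Hyp b \<noteq> Hypc b'"
proof -
  have "0 \<in> Hyp b" "0 \<notin> Hypc b'" by (simp_all add: Hyp_def Hypc_def)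
  then show ?thesis by blast
qed

lemma card_Hyp_Hypc:
  fixes b :: "bit ^ 'n"
  assumes "b \<noteq> 0"
  shows "2 * card (Hyp b) = 2 ^ CARD('n)" and "2 * card (Hypc b) = 2 ^ CARD('n)"
proof -
  obtain u where u: "dotp b u = 1" using exists_dotp_eq_1[OF assms] .
  have "bij_betw (\<lambda>x. x + u) (Hyp b) (Hypc b)"
    by (rule bij_betw_byWitness[where f' = "\<lambda>x. x + u"])
      (auto simp: Hyp_def Hypc_def dotp_add_right u)
  then have same: "card (Hyp b) = card (Hypc b)" by (rule bij_betw_same_card)
  have "UNIV = Hyp b \<union> Hypc b" "Hyp b \<inter> Hypc b = {}"
    by (auto simp: Hyp_def Hypc_def intro: bit.exhaust)
  then have "CARD(bit ^ 'n) = card (Hyp b) + card (Hypc b)"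
    by (metis card_Un_disjoint finite)
  then show "2 * card (Hyp b) = 2 ^ CARD('n)" "2 * card (Hypc b) = 2 ^ CARD('n)"
    using same by (simp_all add:)
qed

lemma sgn_bit_0 [simp]: "sgn_bit 0 = 1" and sgn_bit_1 [simp]: "sgn_bit 1 = -1"
  by (simp_all add: sgn_bit_def)

lemma sgn_bit_add: "sgn_bit (p + q) = sgn_bit p * sgn_bit q"
  by (cases p; cases q) simp_all

lemma sgn_bit_mult_self_left [simp]: "sgn_bit p * (sgn_bit p * z) = z"
  by (cases p) simp_all

lemma sum_sgn_bit_eq_0_if_translation_flips:
  fixes g :: "'a :: ab_group_add \<Rightarrow> bit"
  assumes flip: "\<And>x. g (x + e) = g x + 1"
  shows "(\<Sum>x\<in>UNIV. sgn_bit (g x)) = 0"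
proof -
  have "(\<Sum>x\<in>UNIV. sgn_bit (g x)) = (\<Sum>x\<in>UNIV. sgn_bit (g (x + e)))"
    by (rule sum_UNIV_translate[symmetric])
  also have "\<dots> = - (\<Sum>x\<in>UNIV. sgn_bit (g x))"
    by (simp add: flip sgn_bit_add sum_negf)
  finally show ?thesis by simp
qed

definition autocorrelation :: "(bit ^ 'n \<Rightarrow> bit) \<Rightarrow> bit ^ 'n \<Rightarrow> int" where
  "autocorrelation f a = (\<Sum>x\<in>UNIV. sgn_bit (f x + f (x + a)))"

lemma autocorrelation_0:
  fixes f :: "bit ^ 'n \<Rightarrow> bit"
  shows "autocorrelation f 0 = 2 ^ CARD('n)"
  by (simp add: autocorrelation_def)

lemma walsh_square:
  "(walsh F b u)\<^sup>2 = (\<Sum>a\<in>UNIV. sgn_bit (dotp a u) * autocorrelation (component F b) a)"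
proof -
  let ?f = "component F b"
  let ?s = "\<lambda>x. sgn_bit (?f x + dotp x u)"
  have "(walsh F b u)\<^sup>2 = (\<Sum>x\<in>UNIV. \<Sum>y\<in>UNIV. ?s x * ?s y)"
    unfolding walsh_def power2_eq_square sum_product ..
  also have "\<dots> = (\<Sum>x\<in>UNIV. \<Sum>a\<in>UNIV. ?s x * ?s (x + a))"
  proof (rule sum.cong[OF refl])
    fix x
    show "(\<Sum>y\<in>UNIV. ?s x * ?s y) = (\<Sum>a\<in>UNIV. ?s x * ?s (x + a))"
      using sum_UNIV_translate[of "\<lambda>y. ?s x * ?s y" x] by (simp add: add.commute)
  qed
  also have "\<dots> = (\<Sum>x\<in>UNIV. \<Sum>a\<in>UNIV. sgn_bit (dotp a u) * sgn_bit (?f x + ?f (x + a)))"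
    by (simp add: dotp_add_left sgn_bit_add mult_ac)
  also have "\<dots> = (\<Sum>a\<in>UNIV. sgn_bit (dotp a u) * autocorrelation ?f a)"
    by (subst sum.swap) (simp add: autocorrelation_def sum_distrib_left)
  finally show ?thesis .
qed

lemma bent_if_autocorrelation_vanishes:
  fixes F :: "bit ^ 'n \<Rightarrow> bit ^ 'n"
  assumes "\<And>a. a \<noteq> 0 \<Longrightarrow> autocorrelation (component F b) a = 0"
  shows "is_bent_component F b"
  unfolding is_bent_component_def
proof
  fix u
  have "(walsh F b u)\<^sup>2 = (\<Sum>a\<in>UNIV. if a = (0 :: bit ^ 'n) then 2 ^ CARD('n) else 0)"
    unfolding walsh_square by (rule sum.cong) (simp_all add: assms autocorrelation_0 dotp_commute[of 0])
  also have "\<dots> = 2 ^ CARD('n)" by simp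
  finally have "(real_of_int (walsh F b u))\<^sup>2 = 2 ^ CARD('n)"
    by (metis of_int_numeral of_int_power)
  then show "real_of_int \<bar>walsh F b u\<bar> = sqrt (2 ^ CARD('n))"
    by (metis of_int_abs real_sqrt_abs)
qed

lemma not_bent_if_derivative_constant:
  fixes F :: "bit ^ 'n \<Rightarrow> bit ^ 'n"
  assumes "a \<noteq> 0" and const: "\<And>x. component F b x + component F b (x + a) = c"
  shows "\<not> is_bent_component F b"
proof -
  \<comment> \<open>Choose u so that translating by a flips the sign of every summand of the Walsh sum.\<close>
  obtain u where u: "c + dotp a u = 1"
  proof (cases c)
    case zero
    with exists_dotp_eq_1[OF \<open>a \<noteq> 0\<close>] that show ?thesis by auto
  next
    case one
    with that[of 0] show ?thesis by simp
  qed
  have shift: "component F b (x + a) = component F b x + c" for x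
    using const[of x] by (metis add.left_cancel bit_add_self add.assoc)
  have "walsh F b u = (\<Sum>x\<in>UNIV. sgn_bit (component F b (x + a) + dotp (x + a) u))"
    unfolding walsh_def by (rule sum_UNIV_translate[symmetric])
  also have "\<dots> = (\<Sum>x\<in>UNIV. sgn_bit (c + dotp a u) * sgn_bit (component F b x + dotp x u))"
    by (simp add: shift dotp_add_left sgn_bit_add mult_ac)
  also have "\<dots> = - walsh F b u"
    by (simp add: u walsh_def sum_negf)
  finally have "walsh F b u = 0" by simp
  then have "real_of_int \<bar>walsh F b u\<bar> \<noteq> sqrt (2 ^ CARD('n))" by simp
  then show ?thesis unfolding is_bent_component_def by blast
qed

lemma bit_bilinear_second_difference:
  fixes c x y a a' e e' :: bit
  shows "c * x * y + c * (x + a) * (y + a') + c * (x + e) * (y + e') + c * (x + a + e) * (y + a' + e')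
    = c * (a * e' + e * a')"
  by (cases c; cases x; cases y; cases a; cases a'; cases e; cases e') simp_all

lemma quadratic_component_second_difference:
  assumes "is_quadratic F"
  shows "component F b x + component F b (x + a) + component F b (x + e) + component F b (x + a + e)
    = component F b 0 + component F b a + component F b e + component F b (a + e)"
proof -
  obtain c l k where F_b: "\<And>x. component F b x
      = (\<Sum>i\<in>UNIV. \<Sum>j\<in>UNIV. c i j * x $ i * x $ j) + dotp l x + k"
    using assms unfolding is_quadratic_def by blast
  have "component F b y + component F b (y + a) + component F b (y + e) + component F b (y + a + e)
      = (\<Sum>i\<in>UNIV. \<Sum>j\<in>UNIV. c i j * (a $ i * e $ j + e $ i * a $ j))" for y
  proof -
    have "component F b y + component F b (y + a) + component F b (y + e) + component F b (y + a + e)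
      = (\<Sum>i\<in>UNIV. \<Sum>j\<in>UNIV. c i j * y $ i * y $ j + c i j * (y + a) $ i * (y + a) $ j
           + c i j * (y + e) $ i * (y + e) $ j + c i j * (y + a + e) $ i * (y + a + e) $ j)
        + (dotp l y + dotp l (y + a) + dotp l (y + e) + dotp l (y + a + e)) + (k + k + k + k)"
      unfolding F_b by (simp add: sum.distrib algebra_simps)
    also have "dotp l y + dotp l (y + a) + dotp l (y + e) + dotp l (y + a + e) = 0"
      by (simp add: dotp_add_right algebra_simps)
    also have "k + k + k + k = 0"
      by (simp add: add.assoc[symmetric])
    finally show ?thesis by (simp add: bit_bilinear_second_difference)
  qed
  from this[of x] this[of 0] show ?thesis by simp
qed

lemma quadratic_derivative_constant_or_balanced:
  fixes F :: "bit ^ 'n \<Rightarrow> bit ^ 'n"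
  assumes "is_quadratic F"
  shows "(\<exists>c. \<forall>x. component F b x + component F b (x + a) = c)
    \<or> autocorrelation (component F b) a = 0"
proof (cases "\<exists>c. \<forall>x. component F b x + component F b (x + a) = c")
  case False
  define g where "g x = component F b x + component F b (x + a)" for x
  from False obtain e where "g e \<noteq> g 0" unfolding g_def by metis
  then have "g 0 + g e = 1" by (cases "g 0"; cases "g e") simp_all
  moreover have "g x + g (x + e) = g 0 + g e" for x
    using quadratic_component_second_difference[OF assms, of b x a e] unfolding g_def
    by (simp add: algebra_simps)
  ultimately have "g (x + e) = g x + 1" for x
    by (metis add.left_cancel bit_add_self add.assoc)
  then have "autocorrelation (component F b) a = 0"
    unfolding autocorrelation_def g_def[symmetric] by (rule sum_sgn_bit_eq_0_if_translation_flips)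
  then show ?thesis ..
qed blast

lemma component_derivative: "component F b x + component F b (x + a) = dotp b (Dder F a x)"
  unfolding component_def Dder_def by (simp add: dotp_add_right)

lemma Dder_translate: "Dder F a (x + a) = Dder F a x"
  unfolding Dder_def vec_bit_add_add_cancel by (rule add.commute)

lemma card_fiber_Dder_APN:
  assumes "is_APN F" and "a \<noteq> 0"
  shows "card {x. Dder F a x = Dder F a y} = 2"
proof (rule antisym)
  show "card {x. Dder F a x = Dder F a y} \<le> 2"
    using assms unfolding is_APN_def Dder_def by blast
  have "y + a \<noteq> y" using \<open>a \<noteq> 0\<close> by simp
  then have "card {y, y + a} = 2" by simp
  moreover have "{y, y + a} \<subseteq> {x. Dder F a x = Dder F a y}" by (simp add: Dder_translate)
  ultimately show "2 \<le> card {x. Dder F a x = Dder F a y}"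
    by (metis card_mono finite)
qed

lemma card_range_Dder_APN:
  fixes F :: "bit ^ 'n \<Rightarrow> bit ^ 'n"
  assumes "is_APN F" and "a \<noteq> 0"
  shows "2 * card (range (Dder F a)) = 2 ^ CARD('n)"
proof -
  have fibers: "(UNIV :: (bit ^ 'n) set) = (\<Union>y\<in>range (Dder F a). {x. Dder F a x = y})" by auto
  have "CARD(bit ^ 'n) = (\<Sum>y\<in>range (Dder F a). card {x. Dder F a x = y})"
    by (subst fibers, rule card_UN_disjoint) auto
  also have "\<dots> = (\<Sum>y\<in>range (Dder F a). 2)"
    by (rule sum.cong) (auto simp: card_fiber_Dder_APN[OF assms])
  finally show ?thesis by simp
qed

lemma Vset_nonzero_iff:
  "a \<noteq> 0 \<Longrightarrow> a \<in> Vset F b \<longleftrightarrow> range (Dder F a) = Hyp b \<or> range (Dder F a) = Hypc b"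
  unfolding Vset_def Tset_def Tcset_def by auto

lemma Vset_nonzero_unique:
  assumes "a \<noteq> 0" and "a \<in> Vset F b" and "a \<in> Vset F b'"
  shows "b = b'"
  using assms Vset_nonzero_iff Hyp_inject Hypc_inject Hyp_neq_Hypc by metis

lemma Vset_iff_derivative_constant_APN:
  fixes F :: "bit ^ 'n \<Rightarrow> bit ^ 'n"
  assumes "is_APN F" and "a \<noteq> 0" and "b \<noteq> 0"
  shows "a \<in> Vset F b \<longleftrightarrow> (\<exists>c. \<forall>x. component F b x + component F b (x + a) = c)"
proof -
  have "range (Dder F a) = Hyp b \<longleftrightarrow> range (Dder F a) \<subseteq> Hyp b"
    and "range (Dder F a) = Hypc b \<longleftrightarrow> range (Dder F a) \<subseteq> Hypc b"
    using card_range_Dder_APN[OF assms(1,2)] card_Hyp_Hypc[OF assms(3)]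
    by (metis card_subset_eq finite mult_left_cancel zero_neq_numeral order_refl)+
  moreover have "(\<exists>c. \<forall>x. dotp b (Dder F a x) = c)
      \<longleftrightarrow> range (Dder F a) \<subseteq> Hyp b \<or> range (Dder F a) \<subseteq> Hypc b"
    by (auto simp: Hyp_def Hypc_def)
  ultimately show ?thesis
    by (simp add: Vset_nonzero_iff[OF assms(2)] component_derivative)
qed

lemma not_bent_iff_Vset_nontrivial:
  fixes F :: "bit ^ 'n \<Rightarrow> bit ^ 'n"
  assumes "is_quadratic F" and "is_APN F" and "b \<noteq> 0"
  shows "\<not> is_bent_component F b \<longleftrightarrow> (\<exists>a\<in>Vset F b. a \<noteq> 0)"
proof
  assume "\<not> is_bent_component F b"
  then obtain a where "a \<noteq> 0" and "autocorrelation (component F b) a \<noteq> 0"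
    using bent_if_autocorrelation_vanishes by blast
  then have "\<exists>c. \<forall>x. component F b x + component F b (x + a) = c"
    using quadratic_derivative_constant_or_balanced[OF assms(1)] by blast
  with \<open>a \<noteq> 0\<close> show "\<exists>a\<in>Vset F b. a \<noteq> 0"
    using Vset_iff_derivative_constant_APN[OF assms(2) _ assms(3)] by blast
next
  assume "\<exists>a\<in>Vset F b. a \<noteq> 0"
  then obtain a c where "a \<noteq> 0" and "\<And>x. component F b x + component F b (x + a) = c"
    using Vset_iff_derivative_constant_APN[OF assms(2) _ assms(3)] by blast
  then show "\<not> is_bent_component F b"
    by (rule not_bent_if_derivative_constant)
qed

lemma one_le_dim_iff:
  fixes S :: "('a :: field ^ 'n) set"
  shows "1 \<le> vec.dim S \<longleftrightarrow> (\<exists>a\<in>S. a \<noteq> 0)"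
proof -
  have "1 \<le> vec.dim S \<longleftrightarrow> vec.dim S \<noteq> 0" by linarith
  moreover have "vec.dim S = 0 \<longleftrightarrow> S \<subseteq> {0}" by (rule vec.dim_eq_0)
  moreover have "S \<subseteq> {0} \<longleftrightarrow> \<not> (\<exists>a\<in>S. a \<noteq> 0)" by auto
  ultimately show ?thesis by simp
qed

theorem mainTheorem3:
  fixes F :: "bit ^ 'n \<Rightarrow> bit ^ 'n"
  assumes "even CARD('n)"
    and "is_quadratic F"
    and "is_APN F"
  shows "card (NF F) = card (VF F)"
proof -
  have NF_eq: "NF F = {b. b \<noteq> 0 \<and> (\<exists>a\<in>Vset F b. a \<noteq> 0)}"
    unfolding NF_def using not_bent_iff_Vset_nontrivial[OF assms(2,3)] by blast
  have "VF F = Vset F ` NF F"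
    unfolding VF_def NF_eq one_le_dim_iff by blast
  moreover have "inj_on (Vset F) (NF F)"
    unfolding NF_eq by (rule inj_onI) (use Vset_nonzero_unique in blast)
  ultimately show ?thesis by (simp add: card_image)
qed

end
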